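(* Let $G$ be a modular noetherian right $\ell$-group. Define $\deg' : G^- \to \mathbb{Z}_{\geq 0}$ by $\deg'(g) = k$ whenever $g = x_k x_{k-1} \cdots x_1$ with all $x_i \in X(G^-)$. Then there is a unique group homomorphism $\deg : G \to \mathbb{Z}$ with $\deg(g) = \deg'(g)$ for all $g \in G^-$. It is given by $\deg(g_2^{-1} g_1) = \deg'(g_1) - \deg'(g_2)$ for $g_1,g_2 \in G^-$.
   Context: A right $\ell$-group is a group $G$ (identity $e$) with a right-invariant partial order $\leq$ ($x \leq y \Rightarrow xz \leq yz$) under which $G$ is a lattice. It is modular if this lattice is modular. It is noetherian if for every $g \in G$ the set $\{h : h \geq g\}$ satisfies the descending chain condition and the set $\{h : h \leq g\}$ satisfies the ascending chain condition. $G^- := \{g : g \leq e\}$. $X(G^-) := \{x \in G : x < e$ and there is no $y$ with $x < y < e\}$ is the set of dual atoms. In a modular noetherian right $\ell$-group, every element of $G^-$ is a product of elements of $X(G^-)$, and any two such factorizations of the same element have the same number of factors. Hence $\deg'$ is a well-defined monoid homomorphism. *)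

theory Defs
  imports "HOL-Algebra.Algebra"
begin

definition is_sup :: "'a set \<Rightarrow> ('a \<Rightarrow> 'a \<Rightarrow> bool) \<Rightarrow> 'a \<Rightarrow> 'a \<Rightarrow> 'a \<Rightarrow> bool" where
  "is_sup C R a b s \<longleftrightarrow> s \<in> C \<and> R a s \<and> R b s \<and> (\<forall>u\<in>C. R a u \<and> R b u \<longrightarrow> R s u)"

definition is_inf :: "'a set \<Rightarrow> ('a \<Rightarrow> 'a \<Rightarrow> bool) \<Rightarrow> 'a \<Rightarrow> 'a \<Rightarrow> 'a \<Rightarrow> bool" where
  "is_inf C R a b s \<longleftrightarrow> s \<in> C \<and> R s a \<and> R s b \<and> (\<forall>u\<in>C. R u a \<and> R u b \<longrightarrow> R u s)"

definition ojoin :: "'a set \<Rightarrow> ('a \<Rightarrow> 'a \<Rightarrow> bool) \<Rightarrow> 'a \<Rightarrow> 'a \<Rightarrow> 'a" where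
  "ojoin C R a b = (THE s. is_sup C R a b s)"

definition omeet :: "'a set \<Rightarrow> ('a \<Rightarrow> 'a \<Rightarrow> bool) \<Rightarrow> 'a \<Rightarrow> 'a \<Rightarrow> 'a" where
  "omeet C R a b = (THE s. is_inf C R a b s)"

definition partial_order_on' :: "'a set \<Rightarrow> ('a \<Rightarrow> 'a \<Rightarrow> bool) \<Rightarrow> bool" where
  "partial_order_on' C R \<longleftrightarrow>
     (\<forall>x\<in>C. R x x) \<and>
     (\<forall>x\<in>C. \<forall>y\<in>C. R x y \<and> R y x \<longrightarrow> x = y) \<and>
     (\<forall>x\<in>C. \<forall>y\<in>C. \<forall>z\<in>C. R x y \<and> R y z \<longrightarrow> R x z)"

definition is_lattice_on :: "'a set \<Rightarrow> ('a \<Rightarrow> 'a \<Rightarrow> bool) \<Rightarrow> bool" where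
  "is_lattice_on C R \<longleftrightarrow> partial_order_on' C R \<and>
     (\<forall>a\<in>C. \<forall>b\<in>C. (\<exists>s. is_sup C R a b s) \<and> (\<exists>i. is_inf C R a b i))"

definition right_lgroup :: "('a, 'b) monoid_scheme \<Rightarrow> ('a \<Rightarrow> 'a \<Rightarrow> bool) \<Rightarrow> bool" where
  "right_lgroup G R \<longleftrightarrow> group G \<and> is_lattice_on (carrier G) R \<and>
     (\<forall>x\<in>carrier G. \<forall>y\<in>carrier G. \<forall>z\<in>carrier G. R x y \<longrightarrow> R (x \<otimes>\<^bsub>G\<^esub> z) (y \<otimes>\<^bsub>G\<^esub> z))"

definition modular_lattice_on :: "'a set \<Rightarrow> ('a \<Rightarrow> 'a \<Rightarrow> bool) \<Rightarrow> bool" where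
  "modular_lattice_on C R \<longleftrightarrow> (\<forall>a\<in>C. \<forall>b\<in>C. \<forall>c\<in>C. R a c \<longrightarrow>
     ojoin C R a (omeet C R b c) = omeet C R (ojoin C R a b) c)"

definition strictly_le :: "('a \<Rightarrow> 'a \<Rightarrow> bool) \<Rightarrow> 'a \<Rightarrow> 'a \<Rightarrow> bool" where
  "strictly_le R x y \<longleftrightarrow> R x y \<and> x \<noteq> y"

definition noetherian_on :: "'a set \<Rightarrow> ('a \<Rightarrow> 'a \<Rightarrow> bool) \<Rightarrow> bool" where
  "noetherian_on C R \<longleftrightarrow> (\<forall>g\<in>C.
     (\<not> (\<exists>f :: nat \<Rightarrow> 'a. \<forall>i. f i \<in> C \<and> R g (f i) \<and> strictly_le R (f (Suc i)) (f i))) \<and>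
     (\<not> (\<exists>f :: nat \<Rightarrow> 'a. \<forall>i. f i \<in> C \<and> R (f i) g \<and> strictly_le R (f i) (f (Suc i)))))"

definition negcone :: "('a, 'b) monoid_scheme \<Rightarrow> ('a \<Rightarrow> 'a \<Rightarrow> bool) \<Rightarrow> 'a set" where
  "negcone G R = {g \<in> carrier G. R g \<one>\<^bsub>G\<^esub>}"

definition dual_atoms :: "('a, 'b) monoid_scheme \<Rightarrow> ('a \<Rightarrow> 'a \<Rightarrow> bool) \<Rightarrow> 'a set" where
  "dual_atoms G R = {x \<in> carrier G. strictly_le R x \<one>\<^bsub>G\<^esub> \<and>
      \<not> (\<exists>y\<in>carrier G. strictly_le R x y \<and> strictly_le R y \<one>\<^bsub>G\<^esub>)}"

text \<open>Product x_k x_(k-1) ... x_1 of the list [x_k, ..., x_1].\<close>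
definition lprod :: "('a, 'b) monoid_scheme \<Rightarrow> 'a list \<Rightarrow> 'a" where
  "lprod G xs = foldr (\<lambda>x y. x \<otimes>\<^bsub>G\<^esub> y) xs \<one>\<^bsub>G\<^esub>"

definition deg' :: "('a, 'b) monoid_scheme \<Rightarrow> ('a \<Rightarrow> 'a \<Rightarrow> bool) \<Rightarrow> 'a \<Rightarrow> nat" where
  "deg' G R g = (THE k. \<exists>xs. length xs = k \<and> set xs \<subseteq> dual_atoms G R \<and> g = lprod G xs)"

end

theory Submission
  imports Defs
begin

(* By the noetherian condition, below every element of G^- there is a chain of covers up to e,
   so every element of G^- is a product of dual atoms. Modularity makes the length of such a
   product unique: if g = x a = y b with a and b distinct upper covers of g, then a and b are
   both covered by their join, and factoring the join gives factorizations of a and of b of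
   the same length, so induction applies. Hence deg' is additive on G^-. Every g is h2^-1 h1
   with h1, h2 in G^- (take h1 = g meet e), and any two elements of G^- have a common left
   multiple in G^- (via their meet), so deg'(h1) - deg'(h2) does not depend on the
   representation and defines a homomorphism; it is unique because G^- generates G. *)

locale carrier_lattice =
  fixes C :: "'a set" and R :: "'a \<Rightarrow> 'a \<Rightarrow> bool"
  assumes lattice: "is_lattice_on C R"
begin

lemma le_refl: "x \<in> C \<Longrightarrow> R x x"
  using lattice unfolding is_lattice_on_def partial_order_on'_def by blast

lemma le_antisym: "\<lbrakk>x \<in> C; y \<in> C; R x y; R y x\<rbrakk> \<Longrightarrow> x = y"
  using lattice unfolding is_lattice_on_def partial_order_on'_def by blast

lemma le_trans: "\<lbrakk>x \<in> C; y \<in> C; z \<in> C; R x y; R y z\<rbrakk> \<Longrightarrow> R x z"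
  using lattice unfolding is_lattice_on_def partial_order_on'_def by blast

lemma is_sup_ojoin: "a \<in> C \<Longrightarrow> b \<in> C \<Longrightarrow> is_sup C R a b (ojoin C R a b)"
  unfolding ojoin_def
  by (rule theI') (use lattice le_antisym in \<open>auto simp: is_lattice_on_def is_sup_def\<close>)

lemma is_inf_omeet: "a \<in> C \<Longrightarrow> b \<in> C \<Longrightarrow> is_inf C R a b (omeet C R a b)"
  unfolding omeet_def
  by (rule theI') (use lattice le_antisym in \<open>auto simp: is_lattice_on_def is_inf_def\<close>)

lemma join_closed: "a \<in> C \<Longrightarrow> b \<in> C \<Longrightarrow> ojoin C R a b \<in> C"
  and join_left: "a \<in> C \<Longrightarrow> b \<in> C \<Longrightarrow> R a (ojoin C R a b)"
  and join_right: "a \<in> C \<Longrightarrow> b \<in> C \<Longrightarrow> R b (ojoin C R a b)"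
  and join_le: "\<lbrakk>a \<in> C; b \<in> C; u \<in> C; R a u; R b u\<rbrakk> \<Longrightarrow> R (ojoin C R a b) u"
  using is_sup_ojoin unfolding is_sup_def by blast+

lemma meet_closed: "a \<in> C \<Longrightarrow> b \<in> C \<Longrightarrow> omeet C R a b \<in> C"
  and meet_left: "a \<in> C \<Longrightarrow> b \<in> C \<Longrightarrow> R (omeet C R a b) a"
  and meet_right: "a \<in> C \<Longrightarrow> b \<in> C \<Longrightarrow> R (omeet C R a b) b"
  and meet_le: "\<lbrakk>a \<in> C; b \<in> C; u \<in> C; R u a; R u b\<rbrakk> \<Longrightarrow> R u (omeet C R a b)"
  using is_inf_omeet unfolding is_inf_def by blast+

lemma join_comm: "a \<in> C \<Longrightarrow> b \<in> C \<Longrightarrow> ojoin C R a b = ojoin C R b a"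
  by (meson le_antisym join_closed join_le join_left join_right)

lemma join_eq_left: "\<lbrakk>a \<in> C; b \<in> C; R b a\<rbrakk> \<Longrightarrow> ojoin C R a b = a"
  by (meson le_antisym join_closed join_le join_left le_refl)

lemma meet_eq_left: "\<lbrakk>a \<in> C; b \<in> C; R a b\<rbrakk> \<Longrightarrow> omeet C R a b = a"
  by (meson le_antisym meet_closed meet_le meet_left le_refl)

lemma meet_eq_right: "\<lbrakk>a \<in> C; b \<in> C; R b a\<rbrakk> \<Longrightarrow> omeet C R a b = b"
  by (meson le_antisym meet_closed meet_le meet_right le_refl)

definition covered_by :: "'a \<Rightarrow> 'a \<Rightarrow> bool" where
  "covered_by x y \<longleftrightarrow> x \<in> C \<and> y \<in> C \<and> strictly_le R x y \<and>
     \<not> (\<exists>z\<in>C. strictly_le R x z \<and> strictly_le R z y)"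

lemma meet_of_distinct_upper_covers:
  assumes ga: "covered_by g a" and gb: "covered_by g b" and "a \<noteq> b"
  shows "omeet C R a b = g"
proof -
  let ?m = "omeet C R a b"
  have C: "g \<in> C" "a \<in> C" "b \<in> C" and g_a: "R g a" and g_b: "R g b"
    using ga gb unfolding covered_by_def strictly_le_def by blast+
  have m: "?m \<in> C" "R ?m a" using meet_closed[OF C(2,3)] meet_left[OF C(2,3)] by blast+
  have g_m: "R g ?m" using meet_le[OF C(2,3,1) g_a g_b] .
  have "?m \<noteq> a"
  proof
    assume "?m = a"
    then have "strictly_le R a b"
      using meet_right[OF C(2,3)] \<open>a \<noteq> b\<close> unfolding strictly_le_def by simp
    with ga gb show False unfolding covered_by_def by blast
  qed
  with ga m g_m show ?thesis unfolding covered_by_def strictly_le_def by blast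
qed

end

locale modular_carrier_lattice = carrier_lattice +
  assumes modular: "modular_lattice_on C R"
begin

lemma modular_law:
  "\<lbrakk>a \<in> C; b \<in> C; c \<in> C; R a c\<rbrakk> \<Longrightarrow> ojoin C R a (omeet C R b c) = omeet C R (ojoin C R a b) c"
  using modular unfolding modular_lattice_on_def by blast

lemma upper_covering:
  assumes a: "a \<in> C" and b: "b \<in> C" and cov: "covered_by (omeet C R a b) a"
  shows "covered_by b (ojoin C R a b)"
proof -
  let ?m = "omeet C R a b" and ?j = "ojoin C R a b"
  have m: "?m \<in> C" "R ?m b" using meet_closed[OF a b] meet_right[OF a b] by blast+
  have j: "?j \<in> C" using join_closed[OF a b] .
  have "\<not> R a b"
    using cov meet_eq_left[OF a b] unfolding covered_by_def strictly_le_def by auto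
  then have "b \<noteq> ?j" using join_left[OF a b] by auto
  then have b_j: "strictly_le R b ?j" using join_right[OF a b] unfolding strictly_le_def by blast
  \<comment> \<open>Modularity gives t = b join (a meet t), and a meet t lies in [a meet b, a], which
      has no interior points.\<close>
  have between: "t = b \<or> t = ?j" if t: "t \<in> C" "R b t" "R t ?j" for t
  proof -
    let ?p = "omeet C R a t"
    have p: "?p \<in> C" "R ?p a" using meet_closed[OF a t(1)] meet_left[OF a t(1)] by blast+
    have "R ?m t" using le_trans[OF m(1) b t(1) m(2) t(2)] .
    then have "R ?m ?p" using meet_le[OF a t(1) m(1) meet_left[OF a b]] by blast
    moreover have "\<not> (strictly_le R ?m ?p \<and> strictly_le R ?p a)"
      using cov p(1) unfolding covered_by_def by blast
    ultimately have "?p = ?m \<or> ?p = a" using p(2) unfolding strictly_le_def by auto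
    moreover have "ojoin C R b ?p = t"
    proof -
      have "ojoin C R b ?p = omeet C R (ojoin C R b a) t"
        using modular_law[OF b a t(1,2)] .
      also have "\<dots> = t" using join_comm[OF a b] meet_eq_right[OF j t(1) t(3)] by simp
      finally show ?thesis .
    qed
    ultimately show ?thesis using join_eq_left[OF b m(1,2)] join_comm[OF a b] by metis
  qed
  show ?thesis unfolding covered_by_def
  proof (intro conjI b j b_j notI)
    assume "\<exists>z\<in>C. strictly_le R b z \<and> strictly_le R z ?j"
    then obtain z where "z \<in> C" "R b z" "R z ?j" "z \<noteq> b" "z \<noteq> ?j"
      unfolding strictly_le_def by blast
    with between show False by blast
  qed
qed

lemma join_covers_distinct_upper_covers:
  assumes ga: "covered_by g a" and gb: "covered_by g b" and "a \<noteq> b"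
  shows "covered_by a (ojoin C R a b)" "covered_by b (ojoin C R a b)"
proof -
  have C: "a \<in> C" "b \<in> C" using ga gb unfolding covered_by_def by blast+
  have "omeet C R a b = g" "omeet C R b a = g"
    using meet_of_distinct_upper_covers[OF ga gb] meet_of_distinct_upper_covers[OF gb ga] \<open>a \<noteq> b\<close>
    by auto
  then show "covered_by b (ojoin C R a b)" "covered_by a (ojoin C R a b)"
    using upper_covering[OF C] upper_covering[OF C(2,1)] join_comm[OF C] ga gb by auto
qed

end

locale noetherian_carrier_lattice = carrier_lattice +
  assumes noetherian: "noetherian_on C R"
begin

lemma wf_less_above:
  assumes "g \<in> C" shows "wf {(x, y). x \<in> C \<and> R g x \<and> strictly_le R x y}"
  unfolding wf_iff_no_infinite_down_chain
proof
  assume "\<exists>f. \<forall>i. (f (Suc i), f i) \<in> {(x, y). x \<in> C \<and> R g x \<and> strictly_le R x y}"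
  then obtain f where "\<forall>i. f (Suc i) \<in> C \<and> R g (f (Suc i)) \<and> strictly_le R (f (Suc i)) (f i)"
    by auto
  then have "\<exists>h. \<forall>i. h i \<in> C \<and> R g (h i) \<and> strictly_le R (h (Suc i)) (h i)"
    by (intro exI[of _ "\<lambda>i. f (Suc i)"]) blast
  with noetherian assms show False unfolding noetherian_on_def by blast
qed

lemma wf_greater_below:
  assumes "g \<in> C" shows "wf {(x, y). x \<in> C \<and> R x g \<and> strictly_le R y x}"
  unfolding wf_iff_no_infinite_down_chain
proof
  assume "\<exists>f. \<forall>i. (f (Suc i), f i) \<in> {(x, y). x \<in> C \<and> R x g \<and> strictly_le R y x}"
  then obtain f where "\<forall>i. f (Suc i) \<in> C \<and> R (f (Suc i)) g \<and> strictly_le R (f i) (f (Suc i))"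
    by auto
  then have "\<exists>h. \<forall>i. h i \<in> C \<and> R (h i) g \<and> strictly_le R (h i) (h (Suc i))"
    by (intro exI[of _ "\<lambda>i. f (Suc i)"]) blast
  with noetherian assms show False unfolding noetherian_on_def by blast
qed

lemma exists_cover_below:
  assumes c: "c \<in> C" and u: "u \<in> C" "strictly_le R c u"
  shows "\<exists>h. covered_by c h \<and> R h u"
proof -
  define Q where "Q = {h \<in> C. strictly_le R c h \<and> R h u}"
  have "u \<in> Q" using u le_refl unfolding Q_def by blast
  then obtain h where h: "h \<in> Q"
    and minimal: "\<And>z. (z, h) \<in> {(x, y). x \<in> C \<and> R c x \<and> strictly_le R x y} \<Longrightarrow> z \<notin> Q"
    using wfE_min[OF wf_less_above[OF c]] by blast
  have "\<not> (\<exists>z\<in>C. strictly_le R c z \<and> strictly_le R z h)"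
  proof
    assume "\<exists>z\<in>C. strictly_le R c z \<and> strictly_le R z h"
    then obtain z where z: "z \<in> C" "strictly_le R c z" "strictly_le R z h" by blast
    have "z \<in> Q"
      using z h u(1) le_trans[of z h u] unfolding Q_def strictly_le_def by blast
    moreover have "(z, h) \<in> {(x, y). x \<in> C \<and> R c x \<and> strictly_le R x y}"
      using z unfolding strictly_le_def by blast
    ultimately show False using minimal by blast
  qed
  then have "covered_by c h" using h c unfolding Q_def covered_by_def by simp
  then show ?thesis using h unfolding Q_def by blast
qed

end

context monoid
begin

lemma lprod_Nil [simp]: "lprod G [] = \<one>"
  by (simp add: lprod_def)

lemma lprod_Cons [simp]: "lprod G (x # xs) = x \<otimes> lprod G xs"
  by (simp add: lprod_def)

lemma lprod_closed: "set xs \<subseteq> carrier G \<Longrightarrow> lprod G xs \<in> carrier G"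
  by (induction xs) auto

lemma lprod_append:
  "\<lbrakk>set xs \<subseteq> carrier G; set ys \<subseteq> carrier G\<rbrakk> \<Longrightarrow> lprod G (xs @ ys) = lprod G xs \<otimes> lprod G ys"
  by (induction xs) (auto simp: m_assoc lprod_closed)

end

lemma (in group) mult_inv_mult_cancel:
  "\<lbrakk>x \<in> carrier G; y \<in> carrier G\<rbrakk> \<Longrightarrow> x \<otimes> (inv x \<otimes> y) = y"
  by (simp add: m_assoc[symmetric])

locale right_lattice_group = group G + carrier_lattice "carrier G" R
  for G :: "('a, 'b) monoid_scheme" (structure) and R +
  assumes mult_right_mono:
    "\<lbrakk>x \<in> carrier G; y \<in> carrier G; z \<in> carrier G; R x y\<rbrakk> \<Longrightarrow> R (x \<otimes> z) (y \<otimes> z)"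

lemma right_lattice_groupI: "right_lgroup G R \<Longrightarrow> right_lattice_group G R"
  unfolding right_lgroup_def
  by (intro right_lattice_group.intro carrier_lattice.intro right_lattice_group_axioms.intro) auto

context right_lattice_group
begin

lemma le_mult_right_iff:
  assumes "x \<in> carrier G" "y \<in> carrier G" "z \<in> carrier G"
  shows "R (x \<otimes> z) (y \<otimes> z) \<longleftrightarrow> R x y"
  using mult_right_mono[of "x \<otimes> z" "y \<otimes> z" "inv z"] mult_right_mono[of x y z] assms
  by (auto simp: m_assoc)

lemma strictly_le_mult_right_iff:
  assumes "x \<in> carrier G" "y \<in> carrier G" "z \<in> carrier G"
  shows "strictly_le R (x \<otimes> z) (y \<otimes> z) \<longleftrightarrow> strictly_le R x y"
  using le_mult_right_iff[OF assms] assms unfolding strictly_le_def by auto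

lemma covered_by_mult_right:
  assumes cov: "covered_by x y" and z: "z \<in> carrier G"
  shows "covered_by (x \<otimes> z) (y \<otimes> z)"
proof -
  have x: "x \<in> carrier G" and y: "y \<in> carrier G" using cov unfolding covered_by_def by blast+
  have "\<not> (strictly_le R (x \<otimes> z) w \<and> strictly_le R w (y \<otimes> z))" if w: "w \<in> carrier G" for w
  proof -
    have "w = w \<otimes> inv z \<otimes> z" using w z by (simp add: m_assoc)
    then have "strictly_le R (x \<otimes> z) w \<and> strictly_le R w (y \<otimes> z) \<longleftrightarrow>
        strictly_le R x (w \<otimes> inv z) \<and> strictly_le R (w \<otimes> inv z) y"
      using strictly_le_mult_right_iff[of x "w \<otimes> inv z" z] strictly_le_mult_right_iff[of "w \<otimes> inv z" y z]
        x y z w by auto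
    then show ?thesis using cov w z unfolding covered_by_def by auto
  qed
  then show ?thesis
    using cov x y z strictly_le_mult_right_iff[OF x y z] unfolding covered_by_def by auto
qed

lemma dual_atom_iff: "x \<in> dual_atoms G R \<longleftrightarrow> covered_by x \<one>"
  unfolding dual_atoms_def covered_by_def by auto

lemma dual_atoms_closed: "dual_atoms G R \<subseteq> carrier G"
  unfolding dual_atoms_def by auto

lemma covered_by_dual_atom_mult:
  "\<lbrakk>x \<in> dual_atoms G R; a \<in> carrier G\<rbrakk> \<Longrightarrow> covered_by (x \<otimes> a) a"
  using covered_by_mult_right[of x \<one> a] dual_atom_iff by simp

lemma covered_by_lprod_Cons:
  "\<lbrakk>x \<in> dual_atoms G R; set xs \<subseteq> dual_atoms G R\<rbrakk> \<Longrightarrow> covered_by (lprod G (x # xs)) (lprod G xs)"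
  using covered_by_dual_atom_mult lprod_closed dual_atoms_closed by auto

lemma dual_atom_of_covered_by: "covered_by c h \<Longrightarrow> c \<otimes> inv h \<in> dual_atoms G R"
  using covered_by_mult_right[of c h "inv h"] dual_atom_iff unfolding covered_by_def by auto

lemma dual_atom_factorization_of_covered_by:
  assumes "covered_by c h" and "set xs \<subseteq> dual_atoms G R" and "h = lprod G xs"
  shows "set ((c \<otimes> inv h) # xs) \<subseteq> dual_atoms G R \<and> c = lprod G ((c \<otimes> inv h) # xs)"
  using assms dual_atom_of_covered_by[OF assms(1)] unfolding covered_by_def by (auto simp: m_assoc)

lemma mem_negcone: "g \<in> negcone G R \<longleftrightarrow> g \<in> carrier G \<and> R g \<one>"
  by (simp add: negcone_def)

lemma one_mem_negcone: "\<one> \<in> negcone G R"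
  by (simp add: mem_negcone le_refl)

lemma negcone_mult_closed: "\<lbrakk>a \<in> negcone G R; b \<in> negcone G R\<rbrakk> \<Longrightarrow> a \<otimes> b \<in> negcone G R"
  using mult_right_mono[of a \<one> b] le_trans[of "a \<otimes> b" b \<one>] by (auto simp: mem_negcone)

lemma lprod_dual_atoms_mem_negcone: "set xs \<subseteq> dual_atoms G R \<Longrightarrow> lprod G xs \<in> negcone G R"
proof (induction xs)
  case (Cons x xs)
  then have "x \<in> negcone G R" using dual_atom_iff unfolding covered_by_def strictly_le_def mem_negcone
    by auto
  with Cons show ?case using negcone_mult_closed by simp
qed (simp add: one_mem_negcone)

lemma lprod_dual_atoms_eq_one_iff:
  assumes "set xs \<subseteq> dual_atoms G R" shows "lprod G xs = \<one> \<longleftrightarrow> xs = []"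
proof (cases xs)
  case (Cons x ys)
  then have "covered_by (lprod G xs) (lprod G ys)" "R (lprod G ys) \<one>"
    using assms covered_by_lprod_Cons lprod_dual_atoms_mem_negcone[of ys] by (auto simp: mem_negcone)
  then have "lprod G xs \<noteq> \<one>"
    using le_antisym unfolding covered_by_def strictly_le_def by auto
  with Cons show ?thesis by simp
qed simp

lemma negcone_common_left_multiple:
  assumes "h1 \<in> negcone G R" "h2 \<in> negcone G R"
  shows "\<exists>u\<in>negcone G R. \<exists>v\<in>negcone G R. u \<otimes> h1 = v \<otimes> h2"
proof -
  let ?m = "omeet (carrier G) R h1 h2"
  have h: "h1 \<in> carrier G" "h2 \<in> carrier G" using assms by (auto simp: mem_negcone)
  have m: "?m \<in> carrier G" "R ?m h1" "R ?m h2"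
    using meet_closed[OF h] meet_left[OF h] meet_right[OF h] by blast+
  have "?m \<otimes> inv h1 \<in> negcone G R" "?m \<otimes> inv h2 \<in> negcone G R"
    using mult_right_mono[of ?m h1 "inv h1"] mult_right_mono[of ?m h2 "inv h2"] m h
    by (auto simp: mem_negcone)
  moreover have "?m \<otimes> inv h1 \<otimes> h1 = ?m \<otimes> inv h2 \<otimes> h2" using m h by (simp add: m_assoc)
  ultimately show ?thesis by blast
qed

lemma negcone_quotient:
  assumes g: "g \<in> carrier G"
  shows "\<exists>h1\<in>negcone G R. \<exists>h2\<in>negcone G R. g = inv h2 \<otimes> h1"
proof -
  let ?h1 = "omeet (carrier G) R g \<one>"
  let ?h2 = "?h1 \<otimes> inv g"
  have h1: "?h1 \<in> negcone G R" "R ?h1 g"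
    using meet_closed[OF g] meet_left[OF g] meet_right[OF g] by (auto simp: mem_negcone)
  then have "?h2 \<in> negcone G R"
    using mult_right_mono[of ?h1 g "inv g"] g by (auto simp: mem_negcone)
  moreover have "g = inv ?h2 \<otimes> ?h1" using h1 g by (simp add: mem_negcone inv_mult_group m_assoc)
  ultimately show ?thesis using h1 by blast
qed

lemma hom_eq_if_eq_on_negcone:
  assumes "group H" "d1 \<in> hom G H" "d2 \<in> hom G H"
    and eq: "\<And>h. h \<in> negcone G R \<Longrightarrow> d1 h = d2 h" and g: "g \<in> carrier G"
  shows "d1 g = d2 g"
proof -
  interpret d1: group_hom G H d1 using assms by (simp add: group_hom_def group_hom_axioms_def)
  interpret d2: group_hom G H d2 using assms by (simp add: group_hom_def group_hom_axioms_def)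
  obtain h1 h2 where h: "h1 \<in> negcone G R" "h2 \<in> negcone G R" "g = inv h2 \<otimes> h1"
    using negcone_quotient[OF g] by blast
  then show ?thesis using eq by (simp add: mem_negcone)
qed

definition negcone_extension :: "('a \<Rightarrow> nat) \<Rightarrow> 'a \<Rightarrow> int" where
  "negcone_extension f g = (SOME d. \<exists>h1\<in>negcone G R. \<exists>h2\<in>negcone G R.
     g = inv h2 \<otimes> h1 \<and> d = int (f h1) - int (f h2))"

context
  fixes f :: "'a \<Rightarrow> nat"
  assumes additive: "\<And>a b. \<lbrakk>a \<in> negcone G R; b \<in> negcone G R\<rbrakk> \<Longrightarrow> f (a \<otimes> b) = f a + f b"
begin

lemma additive_difference_well_defined:
  assumes h: "h1 \<in> negcone G R" "h2 \<in> negcone G R" and k: "k1 \<in> negcone G R" "k2 \<in> negcone G R"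
    and eq: "inv h2 \<otimes> h1 = inv k2 \<otimes> k1"
  shows "int (f h1) - int (f h2) = int (f k1) - int (f k2)"
proof -
  obtain u v where uv: "u \<in> negcone G R" "v \<in> negcone G R" "u \<otimes> h2 = v \<otimes> k2"
    using negcone_common_left_multiple[OF h(2) k(2)] by blast
  have carrier: "h1 \<in> carrier G" "h2 \<in> carrier G" "k1 \<in> carrier G" "k2 \<in> carrier G"
      "u \<in> carrier G" "v \<in> carrier G"
    using h k uv by (auto simp: mem_negcone)
  have "u \<otimes> h1 = (u \<otimes> h2) \<otimes> (inv h2 \<otimes> h1)" using carrier by (simp add: m_assoc mult_inv_mult_cancel)
  also have "\<dots> = (v \<otimes> k2) \<otimes> (inv k2 \<otimes> k1)" using uv eq by simp
  also have "\<dots> = v \<otimes> k1" using carrier by (simp add: m_assoc mult_inv_mult_cancel)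
  finally have "f u + f h1 = f v + f k1" using additive uv h k by metis
  moreover have "f u + f h2 = f v + f k2" using additive uv h k by metis
  ultimately show ?thesis by linarith
qed

lemma negcone_extension_quotient:
  assumes "h1 \<in> negcone G R" "h2 \<in> negcone G R"
  shows "negcone_extension f (inv h2 \<otimes> h1) = int (f h1) - int (f h2)"
proof -
  have "\<exists>d. \<exists>k1\<in>negcone G R. \<exists>k2\<in>negcone G R.
      inv h2 \<otimes> h1 = inv k2 \<otimes> k1 \<and> d = int (f k1) - int (f k2)"
    using assms by blast
  from someI_ex[OF this] obtain k1 k2 where
    "k1 \<in> negcone G R" "k2 \<in> negcone G R" "inv h2 \<otimes> h1 = inv k2 \<otimes> k1"
    "negcone_extension f (inv h2 \<otimes> h1) = int (f k1) - int (f k2)"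
    unfolding negcone_extension_def by blast
  then show ?thesis using additive_difference_well_defined assms by metis
qed

lemma negcone_extension_on_negcone:
  assumes "g \<in> negcone G R" shows "negcone_extension f g = int (f g)"
proof -
  have "f \<one> = 0" using additive[OF one_mem_negcone one_mem_negcone] by simp
  then show ?thesis
    using negcone_extension_quotient[OF assms one_mem_negcone] assms by (simp add: mem_negcone)
qed

lemma negcone_extension_hom: "negcone_extension f \<in> hom G integer_group"
proof (rule homI)
  fix g g' assume "g \<in> carrier G" "g' \<in> carrier G"
  then obtain h1 h2 k1 k2 where
    h: "h1 \<in> negcone G R" "h2 \<in> negcone G R" "g = inv h2 \<otimes> h1" and
    k: "k1 \<in> negcone G R" "k2 \<in> negcone G R" "g' = inv k2 \<otimes> k1"
    using negcone_quotient by metis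
  obtain u v where uv: "u \<in> negcone G R" "v \<in> negcone G R" "u \<otimes> h1 = v \<otimes> k2"
    using negcone_common_left_multiple[OF h(1) k(2)] by blast
  have carrier: "h1 \<in> carrier G" "h2 \<in> carrier G" "k1 \<in> carrier G" "k2 \<in> carrier G"
      "u \<in> carrier G" "v \<in> carrier G"
    using h k uv by (auto simp: mem_negcone)
  have "h1 \<otimes> inv k2 = inv u \<otimes> v"
    using uv(3) carrier by (metis inv_solve_left inv_solve_right m_closed inv_closed m_assoc)
  have "g \<otimes> g' = inv h2 \<otimes> (h1 \<otimes> inv k2) \<otimes> k1"
    using h(3) k(3) carrier by (simp add: m_assoc)
  also have "\<dots> = inv (u \<otimes> h2) \<otimes> (v \<otimes> k1)"
    using \<open>h1 \<otimes> inv k2 = inv u \<otimes> v\<close> carrier by (simp add: inv_mult_group m_assoc)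
  finally have "g \<otimes> g' = inv (u \<otimes> h2) \<otimes> (v \<otimes> k1)" .
  then have "negcone_extension f (g \<otimes> g') = int (f v + f k1) - int (f u + f h2)"
    using negcone_extension_quotient negcone_mult_closed additive uv h k by metis
  moreover have "f u + f h1 = f v + f k2" using additive uv h k by metis
  ultimately show "negcone_extension f (g \<otimes> g') =
      negcone_extension f g \<otimes>\<^bsub>integer_group\<^esub> negcone_extension f g'"
    using negcone_extension_quotient h k by simp
qed simp

end

end

locale noetherian_right_lattice_group =
  right_lattice_group + noetherian_carrier_lattice "carrier G" R
begin

lemma negcone_dual_atom_factorization:
  "g \<in> negcone G R \<Longrightarrow> \<exists>xs. set xs \<subseteq> dual_atoms G R \<and> g = lprod G xs"
proof (induction g rule: wf_induct_rule[OF wf_greater_below[OF one_closed]])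
  case (1 g)
  show ?case
  proof (cases "g = \<one>")
    case True
    then show ?thesis by (intro exI[of _ "[]"]) simp
  next
    case False
    then obtain h where h: "covered_by g h" "R h \<one>"
      using exists_cover_below[of g \<one>] "1.prems" by (auto simp: mem_negcone strictly_le_def)
    then have "h \<in> negcone G R" "(h, g) \<in> {(x, y). x \<in> carrier G \<and> R x \<one> \<and> strictly_le R y x}"
      unfolding covered_by_def by (auto simp: mem_negcone)
    then obtain xs where "set xs \<subseteq> dual_atoms G R" "h = lprod G xs" using "1.IH" by blast
    then show ?thesis using dual_atom_factorization_of_covered_by[OF h(1)] by blast
  qed
qed

end

locale modular_noetherian_right_lattice_group =
  noetherian_right_lattice_group + modular_carrier_lattice "carrier G" R
begin

lemma dual_atom_factorization_length_unique:
  assumes "set xs \<subseteq> dual_atoms G R" "set ys \<subseteq> dual_atoms G R" "lprod G xs = lprod G ys"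
  shows "length xs = length ys"
  using assms
proof (induction "length xs" arbitrary: xs ys)
  case 0
  then show ?case by (metis length_0_conv lprod_Nil lprod_dual_atoms_eq_one_iff)
next
  case (Suc n)
  obtain x xs' where xs: "xs = x # xs'" using Suc.hyps(2) by (cases xs) auto
  then have "lprod G ys \<noteq> \<one>"
    using Suc.prems lprod_dual_atoms_eq_one_iff[of xs] by simp
  then obtain y ys' where ys: "ys = y # ys'" by (cases ys) auto
  let ?g = "lprod G xs" and ?a = "lprod G xs'" and ?b = "lprod G ys'"
  have atoms: "x \<in> dual_atoms G R" "set xs' \<subseteq> dual_atoms G R"
      "y \<in> dual_atoms G R" "set ys' \<subseteq> dual_atoms G R"
    using Suc.prems xs ys by auto
  then have a: "?a \<in> negcone G R" and b: "?b \<in> negcone G R"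
    using lprod_dual_atoms_mem_negcone by blast+
  have ga: "covered_by ?g ?a" and gb: "covered_by ?g ?b"
    using covered_by_lprod_Cons[OF atoms(1,2)] covered_by_lprod_Cons[OF atoms(3,4)] Suc.prems(3) xs ys
    by simp_all
  have IH: "length zs = n" if "set zs \<subseteq> dual_atoms G R" "?a = lprod G zs" for zs
    using Suc.hyps(1)[OF _ atoms(2) that] Suc.hyps(2) xs by simp
  show ?case
  proof (cases "?a = ?b")
    case True
    then show ?thesis using IH[OF atoms(4)] Suc.hyps(2) xs ys by simp
  next
    case False
    let ?j = "ojoin (carrier G) R ?a ?b"
    have "?j \<in> negcone G R"
      using a b join_closed join_le by (auto simp: mem_negcone)
    then obtain zs where zs: "set zs \<subseteq> dual_atoms G R" "?j = lprod G zs"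
      using negcone_dual_atom_factorization by blast
    have "covered_by ?a ?j" "covered_by ?b ?j"
      using join_covers_distinct_upper_covers[OF ga gb False] by blast+
    then have za: "set (?a \<otimes> inv ?j # zs) \<subseteq> dual_atoms G R" "?a = lprod G (?a \<otimes> inv ?j # zs)"
      and zb: "set (?b \<otimes> inv ?j # zs) \<subseteq> dual_atoms G R" "?b = lprod G (?b \<otimes> inv ?j # zs)"
      using dual_atom_factorization_of_covered_by zs by blast+
    have n: "length (?b \<otimes> inv ?j # zs) = n" using IH[OF za] by simp
    then have "length (?b \<otimes> inv ?j # zs) = length ys'"
      using Suc.hyps(1)[OF _ zb(1) atoms(4) zb(2)[symmetric]] by simp
    then show ?thesis using n Suc.hyps(2) ys by simp
  qed
qed

lemma deg'_lprod: "set xs \<subseteq> dual_atoms G R \<Longrightarrow> deg' G R (lprod G xs) = length xs"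
  unfolding deg'_def by (rule the_equality) (auto dest: dual_atom_factorization_length_unique)

lemma deg'_mult:
  assumes "a \<in> negcone G R" "b \<in> negcone G R"
  shows "deg' G R (a \<otimes> b) = deg' G R a + deg' G R b"
proof -
  obtain xs ys where "set xs \<subseteq> dual_atoms G R" "a = lprod G xs"
    "set ys \<subseteq> dual_atoms G R" "b = lprod G ys"
    using negcone_dual_atom_factorization assms by meson
  then show ?thesis
    using deg'_lprod[of "xs @ ys"] deg'_lprod lprod_append dual_atoms_closed by auto
qed

end

lemma modular_noetherian_right_lattice_groupI:
  assumes "right_lgroup G R" "modular_lattice_on (carrier G) R" "noetherian_on (carrier G) R"
  shows "modular_noetherian_right_lattice_group G R"
proof -
  interpret right_lattice_group G R using assms(1) by (rule right_lattice_groupI)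
  show ?thesis
    using assms by unfold_locales auto
qed

theorem mainTheorem3:
  fixes G :: "('a, 'b) monoid_scheme" and R :: "'a \<Rightarrow> 'a \<Rightarrow> bool"
  assumes "right_lgroup G R"
    and "modular_lattice_on (carrier G) R"
    and "noetherian_on (carrier G) R"
  shows "\<exists>deg. deg \<in> hom G integer_group
            \<and> (\<forall>g\<in>negcone G R. deg g = int (deg' G R g))
            \<and> (\<forall>g1\<in>negcone G R. \<forall>g2\<in>negcone G R.
                 deg (inv\<^bsub>G\<^esub> g2 \<otimes>\<^bsub>G\<^esub> g1) = int (deg' G R g1) - int (deg' G R g2))
            \<and> (\<forall>d. d \<in> hom G integer_group \<and> (\<forall>g\<in>negcone G R. d g = int (deg' G R g))
                   \<longrightarrow> (\<forall>g\<in>carrier G. d g = deg g))"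
proof -
  interpret modular_noetherian_right_lattice_group G R
    using assms by (rule modular_noetherian_right_lattice_groupI)
  let ?deg = "negcone_extension (deg' G R)"
  have hom: "?deg \<in> hom G integer_group"
    and on_negcone: "\<And>g. g \<in> negcone G R \<Longrightarrow> ?deg g = int (deg' G R g)"
    and quotient: "\<And>g1 g2. \<lbrakk>g1 \<in> negcone G R; g2 \<in> negcone G R\<rbrakk> \<Longrightarrow>
                     ?deg (inv\<^bsub>G\<^esub> g2 \<otimes>\<^bsub>G\<^esub> g1) = int (deg' G R g1) - int (deg' G R g2)"
    using negcone_extension_hom negcone_extension_on_negcone negcone_extension_quotient deg'_mult
    by blast+
  have unique: "d g = ?deg g"
    if "d \<in> hom G integer_group" "\<forall>h\<in>negcone G R. d h = int (deg' G R h)" "g \<in> carrier G" for d g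
    using hom_eq_if_eq_on_negcone[OF group_integer_group that(1) hom] that on_negcone by simp
  show ?thesis
    using hom on_negcone quotient unique by blast
qed

end
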